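(* Let $n_y,n_z$ be odd positive integers with $2,n_y,n_z$ pairwise relatively prime, and let $K$ and $K'$ be Lissajous knots with frequencies $(2,n_y,n_z)$, $\phi_x=0$, and phase shift pairs $(\phi_y,\phi_z)$ and $(\phi_y',\phi_z')$ respectively. If $(\phi_y,\phi_z)$ and $(\phi_y',\phi_z')$ are symmetric with respect to the point $(\pi/4,\pi/4)$ or with respect to the point $(\pi/4,3\pi/4)$, then $K$ and $K'$ are equivalent (as knots, up to mirror image).
   Context: A Lissajous knot with frequencies $(n_x,n_y,n_z)$ and phase shifts $(\phi_x,\phi_y,\phi_z)$ is the curve $K(t)=(\cos(n_xt+\phi_x),\cos(n_yt+\phi_y),\cos(n_zt+\phi_z))$, $0\le t\le 2\pi$, when it is embedded. Knots and their mirror images are regarded as equivalent. Two points are symmetric with respect to a point $P$ if $P$ is their midpoint. *)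

theory Defs
  imports "HOL-Analysis.Analysis"
begin

definition lissajous :: "nat \<Rightarrow> nat \<Rightarrow> nat \<Rightarrow> real \<Rightarrow> real \<Rightarrow> real \<Rightarrow> real \<Rightarrow> real \<times> real \<times> real" where
  "lissajous nx ny nz px py pz t =
     (cos (real nx * t + px), cos (real ny * t + py), cos (real nz * t + pz))"

definition is_lissajous_knot :: "nat \<Rightarrow> nat \<Rightarrow> nat \<Rightarrow> real \<Rightarrow> real \<Rightarrow> real \<Rightarrow> bool" where
  "is_lissajous_knot nx ny nz px py pz \<longleftrightarrow> inj_on (lissajous nx ny nz px py pz) {0..<2*pi}"

definition lissajous_set :: "nat \<Rightarrow> nat \<Rightarrow> nat \<Rightarrow> real \<Rightarrow> real \<Rightarrow> real \<Rightarrow> (real \<times> real \<times> real) set" where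
  "lissajous_set nx ny nz px py pz = lissajous nx ny nz px py pz ` {0..2*pi}"

text \<open>Knot equivalence up to mirror image: some self-homeomorphism of R^3
  (orientation preserving or reversing) carries one knot onto the other.\<close>
definition knot_equiv_mirror :: "(real \<times> real \<times> real) set \<Rightarrow> (real \<times> real \<times> real) set \<Rightarrow> bool" where
  "knot_equiv_mirror K K' \<longleftrightarrow>
     (\<exists>h g. homeomorphism (UNIV :: (real \<times> real \<times> real) set) UNIV h g \<and> h ` K = K')"

end

theory Submission
  imports Defs
begin

text \<open>Reversing the parameter, t \<mapsto> \<pi>/2 - t, sends each coordinate cos (n t + p) to
  cos (n \<pi>/2 - n t + p'). When p + p' + n \<pi>/2 is a multiple m \<pi> of \<pi> this equals
  (-1)^m cos (n t + p). So a Lissajous curve whose phases are reflected in this sense is the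
  image of the original one under a coordinate sign change, an involutive linear isometry of R^3.
  For frequencies (2, n_y, n_z) with n_y, n_z odd and \<phi>_x = 0, the symmetries of the phase
  pair about (\<pi>/4, \<pi>/4) and (\<pi>/4, 3\<pi>/4) are exactly such reflections.\<close>

definition sign_flip :: "real \<Rightarrow> real \<Rightarrow> real \<Rightarrow> real \<times> real \<times> real \<Rightarrow> real \<times> real \<times> real" where
  "sign_flip sx sy sz = (\<lambda>(x, y, z). (sx * x, sy * y, sz * z))"

lemma continuous_on_sign_flip: "continuous_on UNIV (sign_flip sx sy sz)"
  unfolding sign_flip_def by (simp add: case_prod_unfold continuous_intros)

lemma sign_flip_involution:
  assumes "sx\<^sup>2 = 1" "sy\<^sup>2 = 1" "sz\<^sup>2 = 1"
  shows "sign_flip sx sy sz (sign_flip sx sy sz p) = p"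
  using assms by (cases p) (simp add: sign_flip_def power2_eq_square flip: mult.assoc)

lemma knot_equiv_mirror_involution:
  assumes "continuous_on UNIV h" "\<And>p. h (h p) = p" "h ` K = K'"
  shows "knot_equiv_mirror K K'"
proof -
  have "homeomorphism UNIV UNIV h h"
    by (rule homeomorphismI) (use assms in auto)
  then show ?thesis
    unfolding knot_equiv_mirror_def using assms(3) by blast
qed

lemma cos_add_int_2pi: "cos (x + 2 * pi * of_int k) = cos x"
  by (simp add: cos_add)

lemma lissajous_add_int_2pi:
  "lissajous nx ny nz px py pz (t + 2 * pi * of_int k) = lissajous nx ny nz px py pz t"
proof -
  have shift: "real n * (t + 2 * pi * of_int k) + p = (real n * t + p) + 2 * pi * of_int (int n * k)"
    for n p by (simp add: algebra_simps)
  show ?thesis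
    unfolding lissajous_def shift cos_add_int_2pi ..
qed

lemma lissajous_set_eq_range:
  "lissajous_set nx ny nz px py pz = range (lissajous nx ny nz px py pz)"
proof (intro equalityI subsetI)
  fix w assume "w \<in> range (lissajous nx ny nz px py pz)"
  then obtain t where w: "w = lissajous nx ny nz px py pz t" by blast
  define k where "k = \<lfloor>t / (2 * pi)\<rfloor>"
  define s where "s = t - 2 * pi * of_int k"
  have "of_int k \<le> t / (2 * pi)" "t / (2 * pi) < of_int k + 1"
    unfolding k_def by linarith+
  then have "s \<in> {0..2*pi}"
    unfolding s_def by (simp add: field_simps)
  moreover have "w = lissajous nx ny nz px py pz s"
    using w lissajous_add_int_2pi[of nx ny nz px py pz s k] by (simp add: s_def)
  ultimately show "w \<in> lissajous_set nx ny nz px py pz"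
    unfolding lissajous_set_def by blast
qed (auto simp: lissajous_set_def)

lemma image_range_reparam_reverse:
  fixes c :: "'a::ab_group_add"
  assumes "\<And>t. h (f t) = g (c - t)"
  shows "h ` range f = range g"
proof -
  have "surj (\<lambda>t. c - t)"
    by (rule surjI[of _ "\<lambda>s. c - s"]) simp
  then have "range g = range (\<lambda>t. g (c - t))"
    by (metis image_image)
  then show ?thesis
    using assms by (simp add: image_image)
qed

lemma cos_reflect_phase:
  assumes "p + q + real n * pi / 2 = real m * pi"
  shows "cos (real n * (pi / 2 - t) + q) = (-1) ^ m * cos (real n * t + p)"
proof -
  have "real n * (pi / 2 - t) + q = real m * pi - (real n * t + p)"
    using assms by (simp add: algebra_simps)
  then show ?thesis
    by (simp add: cos_diff)
qed

lemma lissajous_reflect_phases: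
  assumes "px + px' + real nx * pi / 2 = real i * pi"
    and "py + py' + real ny * pi / 2 = real j * pi"
    and "pz + pz' + real nz * pi / 2 = real k * pi"
  shows "lissajous nx ny nz px' py' pz' (pi / 2 - t) =
    sign_flip ((-1) ^ i) ((-1) ^ j) ((-1) ^ k) (lissajous nx ny nz px py pz t)"
  unfolding lissajous_def sign_flip_def
  using cos_reflect_phase[OF assms(1)] cos_reflect_phase[OF assms(2)] cos_reflect_phase[OF assms(3)]
  by simp

lemma knot_equiv_mirror_reflect_phases:
  assumes "px + px' + real nx * pi / 2 = real i * pi"
    and "py + py' + real ny * pi / 2 = real j * pi"
    and "pz + pz' + real nz * pi / 2 = real k * pi"
  shows "knot_equiv_mirror (lissajous_set nx ny nz px py pz) (lissajous_set nx ny nz px' py' pz')"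
proof (rule knot_equiv_mirror_involution)
  let ?h = "sign_flip ((-1) ^ i) ((-1) ^ j) ((-1) ^ k)"
  show "continuous_on UNIV ?h"
    by (rule continuous_on_sign_flip)
  show "?h (?h p) = p" for p
    by (rule sign_flip_involution) (simp_all flip: power_mult)
  show "?h ` lissajous_set nx ny nz px py pz = lissajous_set nx ny nz px' py' pz'"
    unfolding lissajous_set_eq_range
    by (rule image_range_reparam_reverse[where c = "pi / 2"]) (simp add: lissajous_reflect_phases[OF assms])
qed

theorem proposition2:
  fixes ny nz :: nat and py pz py' pz' :: real
  assumes "ny > 0" "nz > 0" "odd ny" "odd nz"
    and "coprime (2::nat) ny" "coprime (2::nat) nz" "coprime ny nz"
    and "is_lissajous_knot 2 ny nz 0 py pz"
    and "is_lissajous_knot 2 ny nz 0 py' pz'"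
    and "((py + py') / 2 = pi / 4 \<and> (pz + pz') / 2 = pi / 4) \<or>
         ((py + py') / 2 = pi / 4 \<and> (pz + pz') / 2 = 3 * pi / 4)"
  shows "knot_equiv_mirror (lissajous_set 2 ny nz 0 py pz) (lissajous_set 2 ny nz 0 py' pz')"
proof -
  obtain a where a: "ny = 2 * a + 1" using \<open>odd ny\<close> oddE by blast
  obtain b where b: "nz = 2 * b + 1" using \<open>odd nz\<close> oddE by blast
  have x: "0 + 0 + real 2 * pi / 2 = real 1 * pi" by simp
  have y: "py + py' + real ny * pi / 2 = real (a + 1) * pi"
    using assms(10) a by (auto simp: field_simps)
  obtain k where z: "pz + pz' + real nz * pi / 2 = real k * pi"
  proof (cases "(pz + pz') / 2 = pi / 4")
    case True
    then show ?thesis using b by (intro that[of "b + 1"]) (auto simp: field_simps)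
  next
    case False
    then have "(pz + pz') / 2 = 3 * pi / 4" using assms(10) by auto
    then show ?thesis using b by (intro that[of "b + 2"]) (auto simp: field_simps)
  qed
  show ?thesis
    using knot_equiv_mirror_reflect_phases[OF x y z] by simp
qed

end
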